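(* Assume $n=\sum_l c_l$, let $\pi'$ maximize $\sum_i g_{\pi_i}(x_i)$ over $\Pi_{\mathbf x,\mathbf y,\mathbf l}$, and let $\mathbf g'$ be as defined from an optimal dual solution $(\hat{\mathbf u},\hat{\mathbf v})$ ($g'_l(x_i)=\hat u_i+\hat v_l$ if $\pi'_i=l$, else $g_l(x_i)$). Then $\|\mathbf g'-\mathbf g\|_1\le\|\mathbf g''-\mathbf g\|_1$ for every $\pi''\in\Pi_{\mathbf x,\mathbf y,\mathbf l}$ and every $\mathbf g''$ with $\pi''\in\hat\Pi(\mathbf g'')$; that is, $\mathbf g'$ is a minimal modification of $\mathbf g$ under which some counterfactually harmless assignment maximizes predicted utility.
   Context: Setup: a pool $\mathcal I$ of $n$ refugees with features $\mathbf x=(x_i)$, realized placements $\mathbf l=(l_i)\in\mathcal L^n$ and outcomes $\mathbf y\in\{0,1\}^n$; finite location set $\mathcal L$ with capacities $c_l$; predicted probabilities $\mathbf g=(g_l(x_i))\in[0,1]^{\mathcal I\times\mathcal L}$. An assignment is a map $\pi:\mathcal I\to\mathcal L$ with $|\{i:\pi_i=l\}|\le c_l$. For a weight matrix $\mathbf h$, $\hat\Pi(\mathbf h)$ is the set of assignments maximizing $\sum_i h_{\pi_i}(x_i)$. $\Pi_{\mathbf x,\mathbf y,\mathbf l}$ is the set of assignments with $\pi_i=l_i$ whenever $y_i=1$. The dual linear program is $\min \sum_i u_i+\sum_l c_lv_l$ s.t. $u_i+v_l\ge g_l(x_i)$ for all $i,l$, $u_i,v_l\ge0$. $\|\cdot\|_1$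 is the entrywise $\ell_1$ norm. *)

theory Defs
  imports Complex_Main
begin

text \<open>Refugees are a finite set I of type 'i, locations a finite set L of type 'l,
  capacities c :: 'l => nat. Weight matrices are functions 'i => 'l => real,
  with h i l standing for h_l(x_i).\<close>

definition is_assignment :: "'i set \<Rightarrow> 'l set \<Rightarrow> ('l \<Rightarrow> nat) \<Rightarrow> ('i \<Rightarrow> 'l) \<Rightarrow> bool" where
  "is_assignment I L c \<pi> \<longleftrightarrow>
     (\<forall>i\<in>I. \<pi> i \<in> L) \<and> (\<forall>l\<in>L. card {i\<in>I. \<pi> i = l} \<le> c l)"

definition utility :: "'i set \<Rightarrow> ('i \<Rightarrow> 'l \<Rightarrow> real) \<Rightarrow> ('i \<Rightarrow> 'l) \<Rightarrow> real" where
  "utility I h \<pi> = (\<Sum>i\<in>I. h i (\<pi> i))"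

definition optimal_assignment ::
  "'i set \<Rightarrow> 'l set \<Rightarrow> ('l \<Rightarrow> nat) \<Rightarrow> ('i \<Rightarrow> 'l \<Rightarrow> real) \<Rightarrow> ('i \<Rightarrow> 'l) \<Rightarrow> bool" where
  "optimal_assignment I L c h \<pi> \<longleftrightarrow>
     is_assignment I L c \<pi> \<and>
     (\<forall>\<sigma>. is_assignment I L c \<sigma> \<longrightarrow> utility I h \<sigma> \<le> utility I h \<pi>)"

definition harmless_assignment ::
  "'i set \<Rightarrow> 'l set \<Rightarrow> ('l \<Rightarrow> nat) \<Rightarrow> ('i \<Rightarrow> bool) \<Rightarrow> ('i \<Rightarrow> 'l) \<Rightarrow> ('i \<Rightarrow> 'l) \<Rightarrow> bool" where
  "harmless_assignment I L c y lr \<pi> \<longleftrightarrow>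
     is_assignment I L c \<pi> \<and> (\<forall>i\<in>I. y i \<longrightarrow> \<pi> i = lr i)"

definition dual_feasible ::
  "'i set \<Rightarrow> 'l set \<Rightarrow> ('i \<Rightarrow> 'l \<Rightarrow> real) \<Rightarrow> ('i \<Rightarrow> real) \<Rightarrow> ('l \<Rightarrow> real) \<Rightarrow> bool" where
  "dual_feasible I L g u v \<longleftrightarrow>
     (\<forall>i\<in>I. \<forall>l\<in>L. u i + v l \<ge> g i l) \<and> (\<forall>i\<in>I. u i \<ge> 0) \<and> (\<forall>l\<in>L. v l \<ge> 0)"

definition dual_objective ::
  "'i set \<Rightarrow> 'l set \<Rightarrow> ('l \<Rightarrow> nat) \<Rightarrow> ('i \<Rightarrow> real) \<Rightarrow> ('l \<Rightarrow> real) \<Rightarrow> real" where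
  "dual_objective I L c u v = (\<Sum>i\<in>I. u i) + (\<Sum>l\<in>L. real (c l) * v l)"

definition dual_optimal ::
  "'i set \<Rightarrow> 'l set \<Rightarrow> ('l \<Rightarrow> nat) \<Rightarrow> ('i \<Rightarrow> 'l \<Rightarrow> real) \<Rightarrow> ('i \<Rightarrow> real) \<Rightarrow> ('l \<Rightarrow> real) \<Rightarrow> bool" where
  "dual_optimal I L c g u v \<longleftrightarrow>
     dual_feasible I L g u v \<and>
     (\<forall>u' v'. dual_feasible I L g u' v' \<longrightarrow>
        dual_objective I L c u v \<le> dual_objective I L c u' v')"

definition l1_dist :: "'i set \<Rightarrow> 'l set \<Rightarrow> ('i \<Rightarrow> 'l \<Rightarrow> real) \<Rightarrow> ('i \<Rightarrow> 'l \<Rightarrow> real) \<Rightarrow> real" where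
  "l1_dist I L a b = (\<Sum>i\<in>I. \<Sum>l\<in>L. \<bar>a i l - b i l\<bar>)"

end

theory Submission
  imports Defs
begin

text \<open>By LP duality the dual optimum D equals the maximal predicted utility, and it is attained
  by an assignment \<sigma> using only tight edges u_i + v_l = g_l(x_i): Hall's condition for the
  tight graph holds because a violating set S of refugees would let one lower u on S and raise v on
  the tight neighbourhood of S, improving the dual objective. Replacing g by the tight values along
  \<pi>' costs at most D - U(\<pi>') = U(\<sigma>) - U(\<pi>') in l1 norm, while any g'' under
  which a harmless \<pi>'' is optimal must differ from g by at least U(\<sigma>) - U(\<pi>'') \<ge>
  U(\<sigma>) - U(\<pi>'), since \<pi>' is the best harmless assignment.\<close>

subsection \<open>Hall's theorem with capacities\<close>

definition neighbours :: "('i \<Rightarrow> 'l \<Rightarrow> bool) \<Rightarrow> 'l set \<Rightarrow> 'i set \<Rightarrow> 'l set" where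
  "neighbours E L S = {l\<in>L. \<exists>i\<in>S. E i l}"

definition hall_condition :: "('i \<Rightarrow> 'l \<Rightarrow> bool) \<Rightarrow> 'i set \<Rightarrow> 'l set \<Rightarrow> ('l \<Rightarrow> nat) \<Rightarrow> bool" where
  "hall_condition E I L c \<longleftrightarrow> (\<forall>S\<subseteq>I. card S \<le> (\<Sum>l\<in>neighbours E L S. c l))"

lemma neighbours_mono: "S \<subseteq> T \<Longrightarrow> neighbours E L S \<subseteq> neighbours E L T"
  unfolding neighbours_def by auto

lemma finite_neighbours: "finite L \<Longrightarrow> finite (neighbours E L S)"
  unfolding neighbours_def by simp

lemma is_assignment_Un:
  assumes "is_assignment S L c1 \<sigma>1" and "is_assignment T L c2 \<sigma>2" and "S \<inter> T = {}"
  shows "is_assignment (S \<union> T) L (\<lambda>l. c1 l + c2 l) (\<lambda>i. if i \<in> S then \<sigma>1 i else \<sigma>2 i)"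
  unfolding is_assignment_def
proof (intro conjI ballI)
  fix l assume l: "l \<in> L"
  have "card {i\<in>S \<union> T. (if i \<in> S then \<sigma>1 i else \<sigma>2 i) = l} = card ({i\<in>S. \<sigma>1 i = l} \<union> {i\<in>T. \<sigma>2 i = l})"
    using assms(3) by (intro arg_cong[where f = card]) auto
  also have "\<dots> \<le> card {i\<in>S. \<sigma>1 i = l} + card {i\<in>T. \<sigma>2 i = l}"
    by (rule card_Un_le)
  also have "\<dots> \<le> c1 l + c2 l"
    using assms(1,2) l unfolding is_assignment_def by (meson add_mono)
  finally show "card {i\<in>S \<union> T. (if i \<in> S then \<sigma>1 i else \<sigma>2 i) = l} \<le> c1 l + c2 l" .
next
  fix i assume "i \<in> S \<union> T"
  then show "(if i \<in> S then \<sigma>1 i else \<sigma>2 i) \<in> L"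
    using assms(1,2) unfolding is_assignment_def by (cases "i \<in> S") auto
qed

lemma hall_condition_restrict:
  assumes "hall_condition E I L c" and "S \<subseteq> I"
  shows "hall_condition E S L (\<lambda>l. if l \<in> neighbours E L S then c l else 0)"
  unfolding hall_condition_def
proof (intro allI impI)
  fix T assume "T \<subseteq> S"
  then have "neighbours E L T \<subseteq> neighbours E L S"
    by (rule neighbours_mono)
  then have "(\<Sum>l\<in>neighbours E L T. if l \<in> neighbours E L S then c l else 0) = (\<Sum>l\<in>neighbours E L T. c l)"
    by (intro sum.cong) auto
  moreover have "T \<subseteq> I"
    using \<open>T \<subseteq> S\<close> assms(2) by (rule order.trans)
  ultimately show "card T \<le> (\<Sum>l\<in>neighbours E L T. if l \<in> neighbours E L S then c l else 0)"
    using assms(1) unfolding hall_condition_def by simp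
qed

lemma hall_condition_remove_critical:
  assumes fin: "finite I" "finite L" and hall: "hall_condition E I L c"
    and S: "S \<subseteq> I" "(\<Sum>l\<in>neighbours E L S. c l) \<le> card S"
  shows "hall_condition E (I - S) L (\<lambda>l. if l \<in> neighbours E L S then 0 else c l)"
  unfolding hall_condition_def
proof (intro allI impI)
  fix T assume T: "T \<subseteq> I - S"
  let ?N = "neighbours E L" and ?c' = "\<lambda>l. if l \<in> neighbours E L S then 0 else c l"
  have disj: "?N (T \<union> S) = (?N T - ?N S) \<union> ?N S"
    unfolding neighbours_def by auto
  have "card T + card S = card (T \<union> S)"
    using T fin S(1) by (intro card_Un_disjoint[symmetric]) (auto intro: finite_subset)
  also have "\<dots> \<le> (\<Sum>l\<in>?N (T \<union> S). c l)"
    using hall T S(1) unfolding hall_condition_def by (meson Diff_subset Un_least order.trans)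
  also have "\<dots> = (\<Sum>l\<in>?N T - ?N S. c l) + (\<Sum>l\<in>?N S. c l)"
    unfolding disj using fin(2) by (intro sum.union_disjoint) (auto simp: finite_neighbours)
  also have "(\<Sum>l\<in>?N T - ?N S. c l) = (\<Sum>l\<in>?N T. ?c' l)"
    using fin(2) by (intro sum.mono_neutral_cong_left) (auto simp: finite_neighbours)
  finally show "card T \<le> (\<Sum>l\<in>?N T. ?c' l)"
    using S(2) by linarith
qed

lemma hall_condition_remove_one:
  assumes fin: "finite L"
    and strict: "\<forall>T. T \<noteq> {} \<and> T \<subset> I \<longrightarrow> card T < (\<Sum>l\<in>neighbours E L T. c l)"
    and "i0 \<in> I" and "0 < c l0"
  shows "hall_condition E (I - {i0}) L (c(l0 := c l0 - 1))"
  unfolding hall_condition_def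
proof (intro allI impI)
  fix T assume T: "T \<subseteq> I - {i0}"
  have decrease: "(\<Sum>l\<in>A. c l) \<le> (\<Sum>l\<in>A. (c(l0 := c l0 - 1)) l) + 1" if "finite A" for A
  proof (cases "l0 \<in> A")
    case True
    then show ?thesis
      using that assms(4) by (simp add: sum.remove[of A l0])
  next
    case False
    then have "(\<Sum>l\<in>A. (c(l0 := c l0 - 1)) l) = (\<Sum>l\<in>A. c l)"
      by (intro sum.cong) auto
    then show ?thesis by simp
  qed
  show "card T \<le> (\<Sum>l\<in>neighbours E L T. (c(l0 := c l0 - 1)) l)"
  proof (cases "T = {}")
    case False
    then have "card T < (\<Sum>l\<in>neighbours E L T. c l)"
      using strict T \<open>i0 \<in> I\<close> by blast
    then show ?thesis
      using decrease[OF finite_neighbours[OF fin, of E T]] by linarith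
  qed simp
qed

text \<open>Halmos--Vaughan induction: a nonempty proper critical set S is matched into its own
  neighbourhood and I - S into the remaining capacity; if there is none, every proper subset has
  surplus, so any edge at a refugee may be fixed.\<close>

theorem capacitated_hall:
  assumes "finite I" and "finite L" and "hall_condition E I L c"
  shows "\<exists>\<sigma>. is_assignment I L c \<sigma> \<and> (\<forall>i\<in>I. E i (\<sigma> i))"
  using assms
proof (induction "card I" arbitrary: I c rule: less_induct)
  case less
  let ?N = "neighbours E L"
  show ?case
  proof (cases "\<exists>S. S \<noteq> {} \<and> S \<subset> I \<and> (\<Sum>l\<in>?N S. c l) \<le> card S")
    case True
    then obtain S where S: "S \<noteq> {}" "S \<subset> I" "(\<Sum>l\<in>?N S. c l) \<le> card S"
      by blast
    have "finite S" "finite (I - S)"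
      using S(2) less.prems(1) by (auto intro: finite_subset)
    have "I - S \<subset> I"
      using S(1,2) by blast
    obtain \<sigma>1 where \<sigma>1: "is_assignment S L (\<lambda>l. if l \<in> ?N S then c l else 0) \<sigma>1"
      "\<forall>i\<in>S. E i (\<sigma>1 i)"
      using less.hyps[OF psubset_card_mono[OF less.prems(1) S(2)] \<open>finite S\<close> less.prems(2)
          hall_condition_restrict[OF less.prems(3)]] S(2) by blast
    obtain \<sigma>2 where \<sigma>2: "is_assignment (I - S) L (\<lambda>l. if l \<in> ?N S then 0 else c l) \<sigma>2"
      "\<forall>i\<in>I - S. E i (\<sigma>2 i)"
      using less.hyps[OF psubset_card_mono[OF less.prems(1) \<open>I - S \<subset> I\<close>] \<open>finite (I - S)\<close> less.prems(2)
          hall_condition_remove_critical[OF less.prems]] S(2,3) by blast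
    have "(\<lambda>l. (if l \<in> ?N S then c l else 0) + (if l \<in> ?N S then 0 else c l)) = c"
      by auto
    moreover have "S \<union> (I - S) = I"
      using S(2) by blast
    ultimately have "is_assignment I L c (\<lambda>i. if i \<in> S then \<sigma>1 i else \<sigma>2 i)"
      using is_assignment_Un[OF \<sigma>1(1) \<sigma>2(1)] by simp
    then show ?thesis
      using \<sigma>1(2) \<sigma>2(2) by auto
  next
    case no_critical: False
    show ?thesis
    proof (cases "I = {}")
      case True
      then show ?thesis
        by (simp add: is_assignment_def)
    next
      case False
      then obtain i0 where "i0 \<in> I"
        by blast
      then have "card {i0} \<le> (\<Sum>l\<in>?N {i0}. c l)"
        using less.prems(3) unfolding hall_condition_def by blast
      then obtain l0 where "l0 \<in> ?N {i0}" "c l0 \<noteq> 0"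
        using sum.not_neutral_contains_not_neutral by fastforce
      then have l0: "l0 \<in> L" "E i0 l0" "0 < c l0"
        unfolding neighbours_def by auto
      have "hall_condition E (I - {i0}) L (c(l0 := c l0 - 1))"
        using hall_condition_remove_one[where I = I and E = E and c = c] less.prems(2)
          no_critical \<open>i0 \<in> I\<close> l0(3) by (meson not_le)
      then obtain \<sigma>' where \<sigma>': "is_assignment (I - {i0}) L (c(l0 := c l0 - 1)) \<sigma>'"
        "\<forall>i\<in>I - {i0}. E i (\<sigma>' i)"
        using less.hyps[OF card_Diff1_less[OF less.prems(1) \<open>i0 \<in> I\<close>]] less.prems(1,2) by blast
      have "is_assignment {i0} L (\<lambda>l. of_bool (l = l0)) (\<lambda>_. l0)"
        using l0(1) by (auto simp: is_assignment_def)
      moreover have "(\<lambda>l. of_bool (l = l0) + (c(l0 := c l0 - 1)) l) = c"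
        using l0(3) by auto
      moreover have "{i0} \<union> (I - {i0}) = I"
        using \<open>i0 \<in> I\<close> by blast
      ultimately have "is_assignment I L c (\<lambda>i. if i \<in> {i0} then l0 else \<sigma>' i)"
        using is_assignment_Un[OF _ \<sigma>'(1)] by fastforce
      then show ?thesis
        using \<sigma>'(2) l0(2) by auto
    qed
  qed
qed

subsection \<open>Duality for the capacitated assignment problem\<close>

lemma sum_assignment_eq_sum_card_fibres:
  fixes f :: "'l \<Rightarrow> 'a::comm_semiring_1"
  assumes "finite I" and "finite L" and "\<forall>i\<in>I. \<sigma> i \<in> L"
  shows "(\<Sum>i\<in>I. f (\<sigma> i)) = (\<Sum>l\<in>L. of_nat (card {i\<in>I. \<sigma> i = l}) * f l)"
  using sum.group[OF assms(1,2), of \<sigma> "\<lambda>i. f (\<sigma> i)"] assms(3) by (simp add: image_subset_iff)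

lemma assignment_fills_capacities:
  assumes "finite I" and "finite L" and "card I = (\<Sum>l\<in>L. c l)" and "is_assignment I L c \<sigma>"
    and "l \<in> L"
  shows "card {i\<in>I. \<sigma> i = l} = c l"
proof (rule ccontr)
  assume "card {i\<in>I. \<sigma> i = l} \<noteq> c l"
  moreover have le: "\<forall>l\<in>L. card {i\<in>I. \<sigma> i = l} \<le> c l"
    using assms(4) unfolding is_assignment_def by blast
  ultimately have "(\<Sum>l\<in>L. card {i\<in>I. \<sigma> i = l}) < (\<Sum>l\<in>L. c l)"
    using sum_strict_mono_ex1[OF assms(2) le] assms(5) by fastforce
  moreover have "(\<Sum>l\<in>L. card {i\<in>I. \<sigma> i = l}) = card I"
    using sum_assignment_eq_sum_card_fibres[OF assms(1,2), of \<sigma> "\<lambda>_. 1::nat"] assms(4)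
    unfolding is_assignment_def by simp
  ultimately show False
    using assms(3) by simp
qed

lemma finite_pos_lower_bound:
  fixes f :: "'a \<Rightarrow> real"
  assumes "finite A"
  obtains e where "0 < e" and "\<And>a. a \<in> A \<Longrightarrow> 0 < f a \<Longrightarrow> e \<le> f a"
proof
  let ?e = "Min (insert 1 (f ` {a\<in>A. 0 < f a}))"
  show "0 < ?e"
    using assms by simp
  show "?e \<le> f a" if "a \<in> A" "0 < f a" for a
    using assms that by (intro Min_le) auto
qed

lemma dual_objective_perturb:
  assumes "finite I" and "finite L" and "card I = (\<Sum>l\<in>L. c l)" and "S \<subseteq> I" and "N \<subseteq> L"
  shows "dual_objective I L c (\<lambda>i. u i - e * of_bool (i \<in> S) + t) (\<lambda>l. v l + e * of_bool (l \<in> N) - t)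
    = dual_objective I L c u v - e * (real (card S) - (\<Sum>l\<in>N. real (c l)))"
proof -
  have "(\<Sum>i\<in>I. e * of_bool (i \<in> S)) = e * card S"
    using assms(1,4) by (simp add: Int_absorb1 flip: sum_distrib_left)
  moreover have "(\<Sum>l\<in>L. real (c l) * (e * of_bool (l \<in> N))) = e * (\<Sum>l\<in>N. real (c l))"
    using assms(2,5) by (simp add: mult.left_commute Int_absorb1 flip: sum_distrib_left)
  moreover have "(\<Sum>l\<in>L. real (c l) * t) = card I * t"
    using assms(3) by (simp flip: sum_distrib_right)
  ultimately show ?thesis
    by (simp add: dual_objective_def sum.distrib sum_subtractf right_diff_distrib distrib_left)
qed

text \<open>If some u_i vanishes on S, lowering u on S would break nonnegativity; the uniform shift
  by t = e, which leaves the objective unchanged by dual_objective_perturb, repairs this, and then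
  v stays nonnegative because each l outside N has slack at least e against that i.\<close>

lemma dual_feasible_perturb:
  fixes G :: "'i \<Rightarrow> 'l \<Rightarrow> real"
  assumes feas: "dual_feasible I L G u v" and G_nonneg: "\<forall>i\<in>I. \<forall>l\<in>L. 0 \<le> G i l"
    and "S \<subseteq> I" and "0 < e"
    and slack: "\<And>i l. i \<in> S \<Longrightarrow> l \<in> L \<Longrightarrow> l \<notin> N \<Longrightarrow> e \<le> u i + v l - G i l"
    and u_large: "\<And>i. i \<in> S \<Longrightarrow> 0 < u i \<Longrightarrow> e \<le> u i"
    and t: "t = (if \<forall>i\<in>S. 0 < u i then 0 else e)"
  shows "dual_feasible I L G (\<lambda>i. u i - e * of_bool (i \<in> S) + t) (\<lambda>l. v l + e * of_bool (l \<in> N) - t)"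
proof -
  have cover: "\<forall>i\<in>I. \<forall>l\<in>L. G i l \<le> u i + v l"
    and u_nonneg: "\<forall>i\<in>I. 0 \<le> u i" and v_nonneg: "\<forall>l\<in>L. 0 \<le> v l"
    using feas unfolding dual_feasible_def by auto
  show ?thesis
    unfolding dual_feasible_def
  proof (intro conjI ballI)
    fix i l assume "i \<in> I" "l \<in> L"
    show "G i l \<le> u i - e * of_bool (i \<in> S) + t + (v l + e * of_bool (l \<in> N) - t)"
    proof (cases "i \<in> S \<and> l \<notin> N")
      case True
      then show ?thesis
        using slack[of i l] \<open>l \<in> L\<close> by simp
    next
      case False
      moreover have "G i l \<le> u i + v l"
        using cover \<open>i \<in> I\<close> \<open>l \<in> L\<close> by blast
      ultimately show ?thesis
        using \<open>0 < e\<close> by auto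
    qed
  next
    fix i assume "i \<in> I"
    show "0 \<le> u i - e * of_bool (i \<in> S) + t"
      using u_nonneg \<open>i \<in> I\<close> u_large[of i] \<open>0 < e\<close> by (auto simp: t)
  next
    fix l assume "l \<in> L"
    show "0 \<le> v l + e * of_bool (l \<in> N) - t"
    proof (cases "\<forall>i\<in>S. 0 < u i")
      case True
      then show ?thesis
        using v_nonneg \<open>l \<in> L\<close> \<open>0 < e\<close> by (simp add: t)
    next
      case False
      then obtain i1 where "i1 \<in> S" "\<not> 0 < u i1"
        by blast
      moreover have "0 \<le> G i1 l"
        using G_nonneg \<open>S \<subseteq> I\<close> \<open>i1 \<in> S\<close> \<open>l \<in> L\<close> by blast
      ultimately have "l \<notin> N \<Longrightarrow> e \<le> v l"
        using slack[of i1 l] \<open>l \<in> L\<close> by linarith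
      then show ?thesis
        using False v_nonneg \<open>l \<in> L\<close> by (auto simp: t)
    qed
  qed
qed

lemma dual_optimal_tight_hall_condition:
  fixes G :: "'i \<Rightarrow> 'l \<Rightarrow> real"
  assumes finI: "finite I" and finL: "finite L" and cap: "card I = (\<Sum>l\<in>L. c l)"
    and G_nonneg: "\<forall>i\<in>I. \<forall>l\<in>L. 0 \<le> G i l"
    and opt: "dual_optimal I L c G u v"
  shows "hall_condition (\<lambda>i l. u i + v l = G i l) I L c"
  unfolding hall_condition_def
proof (rule ccontr)
  let ?N = "neighbours (\<lambda>i l. u i + v l = G i l) L"
  assume "\<not> (\<forall>S\<subseteq>I. card S \<le> (\<Sum>l\<in>?N S. c l))"
  then obtain S where S: "S \<subseteq> I" and violated: "(\<Sum>l\<in>?N S. c l) < card S"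
    by (meson not_le)
  have "?N S \<subseteq> L" "finite S"
    using S finI unfolding neighbours_def by (auto intro: finite_subset)
  have feas: "dual_feasible I L G u v"
    using opt unfolding dual_optimal_def by blast
  have slack: "0 < u i + v l - G i l" if "i \<in> S" "l \<in> L" "l \<notin> ?N S" for i l
  proof -
    have "u i + v l \<noteq> G i l"
      using that unfolding neighbours_def by blast
    moreover have "G i l \<le> u i + v l"
      using feas that S unfolding dual_feasible_def by blast
    ultimately show ?thesis
      by linarith
  qed
  have "finite (S \<times> L)"
    using \<open>finite S\<close> finL by simp
  then obtain e1 where "0 < e1"
    and e1: "\<And>p. p \<in> S \<times> L \<Longrightarrow> 0 < (\<lambda>(i, l). u i + v l - G i l) p \<Longrightarrow> e1 \<le> (\<lambda>(i, l). u i + v l - G i l) p"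
    by (rule finite_pos_lower_bound[where f = "\<lambda>(i, l). u i + v l - G i l"]) blast+
  obtain e2 where "0 < e2" and e2: "\<And>i. i \<in> S \<Longrightarrow> 0 < u i \<Longrightarrow> e2 \<le> u i"
    using finite_pos_lower_bound[OF \<open>finite S\<close>, of u] by blast
  define e where "e = min e1 e2"
  define t where "t = (if \<forall>i\<in>S. 0 < u i then 0 else e)"
  have "0 < e"
    using \<open>0 < e1\<close> \<open>0 < e2\<close> by (simp add: e_def)
  have "dual_feasible I L G (\<lambda>i. u i - e * of_bool (i \<in> S) + t) (\<lambda>l. v l + e * of_bool (l \<in> ?N S) - t)"
  proof (rule dual_feasible_perturb[OF feas G_nonneg S \<open>0 < e\<close> _ _ t_def])
    show "e \<le> u i + v l - G i l" if "i \<in> S" "l \<in> L" "l \<notin> ?N S" for i l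
      using e1[of "(i, l)"] slack[OF that] that by (simp add: e_def)
    show "e \<le> u i" if "i \<in> S" "0 < u i" for i
      using e2[OF that] by (simp add: e_def)
  qed
  then have "dual_objective I L c u v
      \<le> dual_objective I L c (\<lambda>i. u i - e * of_bool (i \<in> S) + t) (\<lambda>l. v l + e * of_bool (l \<in> ?N S) - t)"
    using opt unfolding dual_optimal_def by blast
  also have "\<dots> = dual_objective I L c u v - e * (real (card S) - (\<Sum>l\<in>?N S. real (c l)))"
    by (rule dual_objective_perturb[OF finI finL cap S \<open>?N S \<subseteq> L\<close>])
  finally have "e * (real (card S) - (\<Sum>l\<in>?N S. real (c l))) \<le> 0"
    by simp
  moreover have "(\<Sum>l\<in>?N S. real (c l)) < real (card S)"
    using violated by (simp only: of_nat_sum[symmetric] of_nat_less_iff)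
  ultimately show False
    using \<open>0 < e\<close> by (simp add: mult_le_0_iff)
qed

lemma dual_optimal_attained_by_assignment:
  fixes G :: "'i \<Rightarrow> 'l \<Rightarrow> real"
  assumes finI: "finite I" and finL: "finite L" and cap: "card I = (\<Sum>l\<in>L. c l)"
    and G_nonneg: "\<forall>i\<in>I. \<forall>l\<in>L. 0 \<le> G i l"
    and opt: "dual_optimal I L c G u v"
  obtains \<sigma> where "is_assignment I L c \<sigma>" and "utility I G \<sigma> = dual_objective I L c u v"
proof -
  obtain \<sigma> where \<sigma>: "is_assignment I L c \<sigma>" and tight: "\<forall>i\<in>I. u i + v (\<sigma> i) = G i (\<sigma> i)"
    using capacitated_hall[OF finI finL dual_optimal_tight_hall_condition[OF assms]] by blast
  have "\<forall>i\<in>I. \<sigma> i \<in> L"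
    using \<sigma> unfolding is_assignment_def by blast
  have "utility I G \<sigma> = (\<Sum>i\<in>I. u i) + (\<Sum>i\<in>I. v (\<sigma> i))"
    unfolding utility_def using tight by (simp flip: sum.distrib)
  also have "(\<Sum>i\<in>I. v (\<sigma> i)) = (\<Sum>l\<in>L. real (card {i\<in>I. \<sigma> i = l}) * v l)"
    using sum_assignment_eq_sum_card_fibres[OF finI finL \<open>\<forall>i\<in>I. \<sigma> i \<in> L\<close>] .
  also have "\<dots> = (\<Sum>l\<in>L. real (c l) * v l)"
    using assignment_fills_capacities[OF finI finL cap \<sigma>] by simp
  finally show ?thesis
    using that \<sigma> unfolding dual_objective_def by blast
qed

lemma l1_dist_dual_modification_le:
  fixes G :: "'i \<Rightarrow> 'l \<Rightarrow> real"
  assumes finI: "finite I" and finL: "finite L" and \<pi>: "is_assignment I L c \<pi>"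
    and feas: "dual_feasible I L G u v"
  shows "l1_dist I L (\<lambda>i l. if \<pi> i = l then u i + v l else G i l) G
    \<le> dual_objective I L c u v - utility I G \<pi>"
proof -
  have \<pi>L: "\<forall>i\<in>I. \<pi> i \<in> L" and \<pi>c: "\<forall>l\<in>L. card {i\<in>I. \<pi> i = l} \<le> c l"
    using \<pi> unfolding is_assignment_def by auto
  have row: "(\<Sum>l\<in>L. \<bar>(if \<pi> i = l then u i + v l else G i l) - G i l\<bar>) = u i + v (\<pi> i) - G i (\<pi> i)"
    if "i \<in> I" for i
  proof -
    have "(\<Sum>l\<in>L. \<bar>(if \<pi> i = l then u i + v l else G i l) - G i l\<bar>)
        = (\<Sum>l\<in>L. if \<pi> i = l then \<bar>u i + v l - G i l\<bar> else 0)"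
      by (intro sum.cong) auto
    also have "\<dots> = \<bar>u i + v (\<pi> i) - G i (\<pi> i)\<bar>"
      using finL \<pi>L that by simp
    also have "\<dots> = u i + v (\<pi> i) - G i (\<pi> i)"
      using feas \<pi>L that unfolding dual_feasible_def by force
    finally show ?thesis .
  qed
  have "l1_dist I L (\<lambda>i l. if \<pi> i = l then u i + v l else G i l) G
      = (\<Sum>i\<in>I. u i) + (\<Sum>i\<in>I. v (\<pi> i)) - utility I G \<pi>"
    unfolding l1_dist_def utility_def by (simp add: row sum.distrib sum_subtractf)
  also have "(\<Sum>i\<in>I. v (\<pi> i)) = (\<Sum>l\<in>L. real (card {i\<in>I. \<pi> i = l}) * v l)"
    using sum_assignment_eq_sum_card_fibres[OF finI finL \<pi>L] .
  also have "\<dots> \<le> (\<Sum>l\<in>L. real (c l) * v l)"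
    using \<pi>c feas unfolding dual_feasible_def by (intro sum_mono mult_right_mono) auto
  finally show ?thesis
    unfolding dual_objective_def by simp
qed

lemma utility_gain_le_l1_dist:
  fixes G h :: "'i \<Rightarrow> 'l \<Rightarrow> real"
  assumes finL: "finite L" and \<sigma>: "is_assignment I L c \<sigma>" and \<pi>: "optimal_assignment I L c h \<pi>"
  shows "utility I G \<sigma> - utility I G \<pi> \<le> l1_dist I L h G"
proof -
  have \<sigma>L: "\<forall>i\<in>I. \<sigma> i \<in> L" and \<pi>L: "\<forall>i\<in>I. \<pi> i \<in> L"
    using \<sigma> \<pi> unfolding optimal_assignment_def is_assignment_def by auto
  have row: "G i (\<sigma> i) - G i (\<pi> i) \<le> (h i (\<sigma> i) - h i (\<pi> i)) + (\<Sum>l\<in>L. \<bar>h i l - G i l\<bar>)"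
    if "i \<in> I" for i
  proof (cases "\<sigma> i = \<pi> i")
    case True
    then show ?thesis
      by (simp add: sum_nonneg)
  next
    case False
    then have "\<bar>h i (\<sigma> i) - G i (\<sigma> i)\<bar> + \<bar>h i (\<pi> i) - G i (\<pi> i)\<bar> \<le> (\<Sum>l\<in>L. \<bar>h i l - G i l\<bar>)"
      using sum_mono2[OF finL, of "{\<sigma> i, \<pi> i}" "\<lambda>l. \<bar>h i l - G i l\<bar>"] \<sigma>L \<pi>L that by simp
    then show ?thesis
      by linarith
  qed
  have "utility I G \<sigma> - utility I G \<pi> \<le> (\<Sum>i\<in>I. (h i (\<sigma> i) - h i (\<pi> i)) + (\<Sum>l\<in>L. \<bar>h i l - G i l\<bar>))"
    unfolding utility_def sum_subtractf[symmetric] using row by (rule sum_mono)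
  also have "\<dots> = (utility I h \<sigma> - utility I h \<pi>) + l1_dist I L h G"
    unfolding utility_def l1_dist_def by (simp add: sum_subtractf sum.distrib)
  also have "utility I h \<sigma> \<le> utility I h \<pi>"
    using \<pi> \<sigma> unfolding optimal_assignment_def by blast
  finally show ?thesis
    by linarith
qed

theorem mainTheorem7:
  fixes I :: "'i set" and L :: "'l set" and c :: "'l \<Rightarrow> nat"
    and x :: "'i \<Rightarrow> 'x" and lr :: "'i \<Rightarrow> 'l" and y :: "'i \<Rightarrow> bool"
    and g :: "'l \<Rightarrow> 'x \<Rightarrow> real"
    and \<pi>' :: "'i \<Rightarrow> 'l" and u :: "'i \<Rightarrow> real" and v :: "'l \<Rightarrow> real"
  assumes finI: "finite I" and finL: "finite L"
    and cap: "card I = (\<Sum>l\<in>L. c l)"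
    and real_loc: "\<forall>i\<in>I. lr i \<in> L"
    and g_range: "\<forall>i\<in>I. \<forall>l\<in>L. 0 \<le> g l (x i) \<and> g l (x i) \<le> 1"
    and pi'_harmless: "harmless_assignment I L c y lr \<pi>'"
    and pi'_max: "\<forall>\<sigma>. harmless_assignment I L c y lr \<sigma> \<longrightarrow>
                    utility I (\<lambda>i l. g l (x i)) \<sigma> \<le> utility I (\<lambda>i l. g l (x i)) \<pi>'"
    and dual_opt: "dual_optimal I L c (\<lambda>i l. g l (x i)) u v"
  shows "\<forall>\<pi>'' g''. harmless_assignment I L c y lr \<pi>'' \<and> optimal_assignment I L c g'' \<pi>'' \<longrightarrow>
           l1_dist I L (\<lambda>i l. if \<pi>' i = l then u i + v l else g l (x i)) (\<lambda>i l. g l (x i))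
           \<le> l1_dist I L g'' (\<lambda>i l. g l (x i))"
proof (intro allI impI, elim conjE)
  fix \<pi>'' g''
  assume harmless: "harmless_assignment I L c y lr \<pi>''" and opt: "optimal_assignment I L c g'' \<pi>''"
  let ?G = "\<lambda>i l. g l (x i)"
  obtain \<sigma> where \<sigma>: "is_assignment I L c \<sigma>" and attains: "utility I ?G \<sigma> = dual_objective I L c u v"
    using dual_optimal_attained_by_assignment[OF finI finL cap _ dual_opt] g_range by blast
  have "l1_dist I L (\<lambda>i l. if \<pi>' i = l then u i + v l else ?G i l) ?G
      \<le> dual_objective I L c u v - utility I ?G \<pi>'"
    using l1_dist_dual_modification_le[OF finI finL _ _] pi'_harmless dual_opt
    unfolding harmless_assignment_def dual_optimal_def by blast
  also have "\<dots> \<le> utility I ?G \<sigma> - utility I ?G \<pi>''"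
    using attains pi'_max harmless by force
  also have "\<dots> \<le> l1_dist I L g'' ?G"
    by (rule utility_gain_le_l1_dist[OF finL \<sigma> opt])
  finally show "l1_dist I L (\<lambda>i l. if \<pi>' i = l then u i + v l else ?G i l) ?G \<le> l1_dist I L g'' ?G" .
qed

end
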